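(* Let $r\ge1$, $n$ be integers and let $\sigma,\sigma':\mathbb{Z}_n\to\{0,1\}$ be a temporally periodic pair. Let $[a,b],[c,d]\in B(\sigma')$ be adjacent blocks with $c=b+1$. If $\varphi_{\sigma,\sigma'}([a,b])=[a',b']$ and $\varphi_{\sigma,\sigma'}([c,d])=[c',d']$, then $[a',b']$ and $[c',d']$ are adjacent and $c'=b'+1$.
   Context: Cells are elements of $\mathbb{Z}_n$, arithmetic mod $n$; $[a,b]$ denotes the cyclic interval $a,\dots,b$. The majority rule with radius $r$: $\mathrm{maj}_r(\sigma)(i)=0$ if among the cells of $[i-r,i+r]$ strictly more have value $0$ than $1$ under $\sigma$, and $=1$ otherwise. A temporally periodic pair is a pair with $\mathrm{maj}_r(\sigma)=\sigma'$ and $\mathrm{maj}_r(\sigma')=\sigma$. For $\beta\in\{0,1\}$, $B^\beta(\sigma)$ is the set of cell intervals $[i,j]$ with $\sigma(k)=\beta$ for all $k\in[i,j]$ and $\sigma(i-1)=\sigma(j+1)=1-\beta$; $B(\sigma)=B^0(\sigma)\cup B^1(\sigma)$. For $[i,j]\in B(\sigma')$, $f^{\leftarrow}_{\sigma,\sigma'}([i,j])$ is the block of $B(\sigma)$ containing cell $j-r$ and $f^{\rightarrow}_{\sigma,\sigma'}([i,j])$ is the block of $B(\sigma)$ containing cell $i+r$. For blocks $X=[x,y]$, $X'=[x',y']$, the block interval $[X,X']_{B(\sigma)}$ is the sequence of blocks of $B(\sigma)$ contained in $[x,y']$; the number of blocks in $[f^{\leftarrow}_{\sigma,\sigma'}([i,j]),f^{\rightarrow}_{\sigma,\sigma'}([i,j])]_{B(\sigma)}$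 is always odd, and the alignment mapping $\varphi_{\sigma,\sigma'}([i,j])$ is its middle block. *)

theory Defs
  imports Main
begin

text \<open>Cells of Z_n are represented by integers taken modulo n (canonical
representatives in {0..<n}); a configuration is a function int => nat whose
value at a cell i is sigma (i mod n).\<close>

definition cyc_interval :: "int \<Rightarrow> int \<Rightarrow> int \<Rightarrow> int set" where
  "cyc_interval n a b = {(a + k) mod n | k. 0 \<le> k \<and> k \<le> (b - a) mod n}"

definition maj :: "nat \<Rightarrow> int \<Rightarrow> (int \<Rightarrow> nat) \<Rightarrow> int \<Rightarrow> nat" where
  "maj r n \<sigma> i =
     (if card {k \<in> {- int r .. int r}. \<sigma> ((i + k) mod n) = 0}
         > card {k \<in> {- int r .. int r}. \<sigma> ((i + k) mod n) = 1}
      then 0 else 1)"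

definition temporally_periodic_pair ::
  "nat \<Rightarrow> int \<Rightarrow> (int \<Rightarrow> nat) \<Rightarrow> (int \<Rightarrow> nat) \<Rightarrow> bool" where
  "temporally_periodic_pair r n \<sigma> \<sigma>' \<longleftrightarrow>
     (\<forall>i \<in> {0..<n}. maj r n \<sigma> i = \<sigma>' i) \<and> (\<forall>i \<in> {0..<n}. maj r n \<sigma>' i = \<sigma> i)"

definition is_block :: "int \<Rightarrow> (int \<Rightarrow> nat) \<Rightarrow> nat \<Rightarrow> int \<times> int \<Rightarrow> bool" where
  "is_block n \<sigma> \<beta> X \<longleftrightarrow>
     (let i = fst X; j = snd X in
       i \<in> {0..<n} \<and> j \<in> {0..<n} \<and>
       (\<forall>k \<in> cyc_interval n i j. \<sigma> k = \<beta>) \<and>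
       \<sigma> ((i - 1) mod n) = 1 - \<beta> \<and> \<sigma> ((j + 1) mod n) = 1 - \<beta>)"

definition blocks :: "int \<Rightarrow> (int \<Rightarrow> nat) \<Rightarrow> (int \<times> int) set" where
  "blocks n \<sigma> = {X. \<exists>\<beta> \<in> {0, 1}. is_block n \<sigma> \<beta> X}"

definition block_containing :: "int \<Rightarrow> (int \<Rightarrow> nat) \<Rightarrow> int \<Rightarrow> int \<times> int" where
  "block_containing n \<sigma> c =
     (THE X. X \<in> blocks n \<sigma> \<and> c mod n \<in> cyc_interval n (fst X) (snd X))"

definition f_left :: "nat \<Rightarrow> int \<Rightarrow> (int \<Rightarrow> nat) \<Rightarrow> int \<times> int \<Rightarrow> int \<times> int" where
  "f_left r n \<sigma> X = block_containing n \<sigma> (snd X - int r)"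

definition f_right :: "nat \<Rightarrow> int \<Rightarrow> (int \<Rightarrow> nat) \<Rightarrow> int \<times> int \<Rightarrow> int \<times> int" where
  "f_right r n \<sigma> X = block_containing n \<sigma> (fst X + int r)"

definition block_interval ::
  "int \<Rightarrow> (int \<Rightarrow> nat) \<Rightarrow> int \<times> int \<Rightarrow> int \<times> int \<Rightarrow> (int \<times> int) set" where
  "block_interval n \<sigma> X X' =
     {Y \<in> blocks n \<sigma>. cyc_interval n (fst Y) (snd Y) \<subseteq> cyc_interval n (fst X) (snd X')}"

text \<open>Middle element of a set of blocks, ordered cyclically starting at cell x.\<close>
definition middle_block :: "int \<Rightarrow> int \<Rightarrow> (int \<times> int) set \<Rightarrow> int \<times> int" where
  "middle_block n x S =
     (THE Z. Z \<in> S \<and>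
        card {W \<in> S. (fst W - x) mod n < (fst Z - x) mod n}
        = card {W \<in> S. (fst W - x) mod n > (fst Z - x) mod n})"

definition alignment :: "nat \<Rightarrow> int \<Rightarrow> (int \<Rightarrow> nat) \<Rightarrow> (int \<Rightarrow> nat) \<Rightarrow> int \<times> int \<Rightarrow> int \<times> int" where
  "alignment r n \<sigma> \<sigma>' X =
     (let L = f_left r n \<sigma> X; R = f_right r n \<sigma> X
      in middle_block n (fst L) (block_interval n \<sigma> L R))"

end

theory Submission
  imports Defs
begin

(* Lift both configurations to n-periodic functions on the integers.  The boundaries of \<sigma>
   (cells k with \<sigma> k \<noteq> \<sigma> (k + 1)) are enumerated increasingly by block_end, so the blocks
   of \<sigma> are indexed by the integers modulo their number, which is even because colours
   alternate.  Let a block of \<sigma>' of colour \<beta> occupy the cells p + 1, ..., q.  Since \<sigma>' is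
   the majority image of \<sigma> and \<sigma> that of \<sigma>', and shifting a window by one cell changes its
   count only through the leaving and the entering cell, \<sigma> switches exactly once, to \<beta>,
   between p - r and q - r, and exactly once, away from \<beta>, between p + r + 1 and q + r + 1.
   Hence f_left and f_right of the next block of \<sigma>' are the blocks following f_left and
   f_right of [a, b]: the block interval moves by one block, and so does its middle block. *)

section \<open>Discrete intervals\<close>

lemma crossing_exists:
  fixes f :: "int \<Rightarrow> int"
  assumes "a \<le> b" and "f a < x" and "x \<le> f b"
  shows "\<exists>t. a < t \<and> t \<le> b \<and> f (t - 1) < x \<and> x \<le> f t"
  using assms
proof (induction b rule: int_ge_induct)
  case (step b)
  show ?case
  proof (cases "x \<le> f b")
    case True
    with step.IH step.prems show ?thesis by force
  next
    case False
    with step.prems step.hyps show ?thesis by (intro exI[of _ "b + 1"]) auto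
  qed
qed simp

lemma mod_eq_imp_eq_in_window:
  fixes z w c n :: int
  assumes "z mod n = w mod n" and "c \<le> z" "z < c + n" and "c \<le> w" "w < c + n"
  shows "z = w"
proof -
  have "(z - c) mod n = (w - c) mod n" using assms(1) by (metis mod_diff_left_eq)
  with assms(2-5) show ?thesis by (simp add: mod_pos_pos_trivial)
qed

lemma card_key_less_image:
  fixes g :: "int \<Rightarrow> 'a" and key :: "'a \<Rightarrow> int"
  assumes inj: "inj_on g {l..h}" and mono: "strict_mono_on {l..h} (key \<circ> g)"
    and u: "u \<in> {l..h}"
  shows "card {W \<in> g ` {l..h}. key W < key (g u)} = nat (u - l)"
    and "card {W \<in> g ` {l..h}. key (g u) < key W} = nat (h - u)"
proof -
  have less_iff: "key (g v) < key (g u) \<longleftrightarrow> v < u"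
    and greater_iff: "key (g u) < key (g v) \<longleftrightarrow> u < v" if "v \<in> {l..h}" for v
    using strict_mono_on_less[OF mono] that u by simp_all
  have "{W \<in> g ` {l..h}. key W < key (g u)} = g ` {l..<u}"
    using less_iff u by auto
  moreover have "inj_on g {l..<u}" by (rule inj_on_subset[OF inj]) (use u in auto)
  ultimately show "card {W \<in> g ` {l..h}. key W < key (g u)} = nat (u - l)"
    by (simp add: card_image)
  have "{W \<in> g ` {l..h}. key (g u) < key W} = g ` {u<..h}"
    using greater_iff u by auto
  moreover have "inj_on g {u<..h}" by (rule inj_on_subset[OF inj]) (use u in auto)
  ultimately show "card {W \<in> g ` {l..h}. key (g u) < key W} = nat (h - u)"
    by (simp add: card_image)
qed

lemma cyc_interval_eq_image:
  assumes "x \<le> y" and "y - x < n"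
  shows "cyc_interval n (x mod n) (y mod n) = (\<lambda>z. z mod n) ` {x..y}"
proof -
  have "(y mod n - x mod n) mod n = y - x"
    using assms by (simp add: mod_diff_eq)
  then have "cyc_interval n (x mod n) (y mod n) = {(x + k) mod n | k. 0 \<le> k \<and> k \<le> y - x}"
    unfolding cyc_interval_def by (simp add: mod_add_left_eq)
  also have "\<dots> = (\<lambda>z. z mod n) ` {x..y}"
    by (auto simp: image_iff intro!: exI[of _ "z - x" for z] bexI[of _ "x + k" for k])
  finally show ?thesis .
qed

section \<open>Majority windows\<close>

definition window_count :: "(int \<Rightarrow> nat) \<Rightarrow> nat \<Rightarrow> nat \<Rightarrow> int \<Rightarrow> nat" where
  "window_count f \<beta> r i = card {x \<in> {i - int r .. i + int r}. f x = \<beta>}"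

lemma maj_eq_window_count:
  "maj r n \<sigma> i =
     (if window_count (\<lambda>x. \<sigma> (x mod n)) 1 r i < window_count (\<lambda>x. \<sigma> (x mod n)) 0 r i
      then 0 else 1)"
proof -
  have "card {k \<in> {- int r .. int r}. \<sigma> ((i + k) mod n) = \<beta>}
      = window_count (\<lambda>x. \<sigma> (x mod n)) \<beta> r i" for \<beta>
  proof -
    have "{x \<in> {i - int r .. i + int r}. \<sigma> (x mod n) = \<beta>}
        = (+) i ` {k \<in> {- int r .. int r}. \<sigma> ((i + k) mod n) = \<beta>}"
    proof (rule set_eqI)
      fix x
      show "x \<in> {x \<in> {i - int r .. i + int r}. \<sigma> (x mod n) = \<beta>}
        \<longleftrightarrow> x \<in> (+) i ` {k \<in> {- int r .. int r}. \<sigma> ((i + k) mod n) = \<beta>}"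
        by (auto simp: image_iff intro!: exI[of _ "x - i"])
    qed
    then show ?thesis unfolding window_count_def by (simp add: card_image)
  qed
  then show ?thesis unfolding maj_def by simp
qed

lemma maj_binary: "maj r n \<sigma> i = 0 \<or> maj r n \<sigma> i = 1"
  unfolding maj_def by simp

lemma maj_mod: "maj r n \<sigma> (i mod n) = maj r n \<sigma> i"
  by (simp add: maj_def mod_add_left_eq)

lemma window_count_as_sum:
  "window_count f \<beta> r i = (\<Sum>x \<in> {i - int r .. i + int r}. if f x = \<beta> then 1 else 0)"
  unfolding window_count_def by (simp add: sum.If_cases Int_def conj_commute)

lemma window_count_complement:
  assumes "\<forall>x. f x \<in> {0, 1}"
  shows "window_count f 0 r i + window_count f 1 r i = 2 * r + 1"
proof -
  have "window_count f 0 r i + window_count f 1 r i = (\<Sum>x \<in> {i - int r .. i + int r}. 1)"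
    unfolding window_count_as_sum sum.distrib[symmetric]
  proof (rule sum.cong)
    fix x show "(if f x = 0 then 1 else 0) + (if f x = 1 then 1 else 0) = (1::nat)"
      using assms[rule_format, of x] by auto
  qed simp
  then show ?thesis by simp
qed

lemma window_count_succ:
  "window_count f \<beta> r (i + 1) + (if f (i - int r) = \<beta> then 1 else 0)
   = window_count f \<beta> r i + (if f (i + int r + 1) = \<beta> then 1 else 0)"
proof -
  let ?g = "\<lambda>x. if f x = \<beta> then 1 else 0 :: nat"
  let ?W = "{i - int r .. i + int r + 1}"
  have "?W = insert (i - int r) {i + 1 - int r .. i + 1 + int r}" by auto
  then have "sum ?g ?W = ?g (i - int r) + sum ?g {i + 1 - int r .. i + 1 + int r}" by simp
  moreover have "?W = insert (i + int r + 1) {i - int r .. i + int r}" by auto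
  then have "sum ?g ?W = ?g (i + int r + 1) + sum ?g {i - int r .. i + int r}" by simp
  ultimately show ?thesis unfolding window_count_as_sum by simp
qed

lemma maj_eq_iff_window_count:
  assumes "\<forall>x. \<sigma> (x mod n) \<in> {0, 1}" and "\<beta> \<in> {0, 1}"
  shows "maj r n \<sigma> i = \<beta> \<longleftrightarrow> r + 1 \<le> window_count (\<lambda>x. \<sigma> (x mod n)) \<beta> r i"
  using window_count_complement[OF assms(1), of r i] assms(2)
  unfolding maj_eq_window_count by auto

lemma maj_switch_cells:
  assumes "\<forall>x. \<sigma> (x mod n) \<in> {0, 1}" and "\<beta> \<in> {0, 1}"
    and "maj r n \<sigma> i = \<beta>" and "maj r n \<sigma> (i + 1) \<noteq> \<beta>"
  shows "\<sigma> ((i - int r) mod n) = \<beta>" and "\<sigma> ((i + int r + 1) mod n) \<noteq> \<beta>"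
  using assms(3,4) window_count_succ[of "\<lambda>x. \<sigma> (x mod n)" \<beta> r i]
  unfolding maj_eq_iff_window_count[OF assms(1,2)] by (auto split: if_splits)

lemma maj_succ_if_entering:
  assumes "\<forall>x. \<sigma> (x mod n) \<in> {0, 1}" and "\<beta> \<in> {0, 1}"
    and "maj r n \<sigma> i = \<beta>" and "\<sigma> ((i + int r + 1) mod n) = \<beta>"
  shows "maj r n \<sigma> (i + 1) = \<beta>"
  using assms(3,4) window_count_succ[of "\<lambda>x. \<sigma> (x mod n)" \<beta> r i]
  unfolding maj_eq_iff_window_count[OF assms(1,2)] by (auto split: if_splits)

lemma maj_succ_if_leaving:
  assumes "\<forall>x. \<sigma> (x mod n) \<in> {0, 1}" and "\<beta> \<in> {0, 1}"
    and "maj r n \<sigma> i \<noteq> \<beta>" and "\<sigma> ((i - int r) mod n) = \<beta>"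
  shows "maj r n \<sigma> (i + 1) \<noteq> \<beta>"
  using assms(3,4) window_count_succ[of "\<lambda>x. \<sigma> (x mod n)" \<beta> r i]
  unfolding maj_eq_iff_window_count[OF assms(1,2)] by (auto split: if_splits)

section \<open>Blocks of a periodic binary configuration\<close>

lemma blocks_in_range: "(a, b) \<in> blocks n \<tau> \<Longrightarrow> a \<in> {0..<n} \<and> b \<in> {0..<n}"
  unfolding blocks_def is_block_def by auto

definition maximal_run :: "(int \<Rightarrow> nat) \<Rightarrow> nat \<Rightarrow> int \<Rightarrow> int \<Rightarrow> bool" where
  "maximal_run f \<beta> p q \<longleftrightarrow>
     p < q \<and> (\<forall>x. p < x \<and> x \<le> q \<longrightarrow> f x = \<beta>) \<and> f p \<noteq> \<beta> \<and> f (q + 1) \<noteq> \<beta>"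

lemma block_maximal_run:
  assumes "n \<ge> 1" and "(a, b) \<in> blocks n \<tau>"
  shows "\<exists>\<beta> \<in> {0, 1}. \<exists>q. q mod n = b \<and> maximal_run (\<lambda>x. \<tau> (x mod n)) \<beta> (a - 1) q"
proof -
  obtain \<beta> where \<beta>: "\<beta> \<in> {0, 1}" and "is_block n \<tau> \<beta> (a, b)"
    using assms(2) unfolding blocks_def by blast
  then have ab: "a \<in> {0..<n}" "b \<in> {0..<n}"
    and inside: "\<forall>k \<in> cyc_interval n a b. \<tau> k = \<beta>"
    and left: "\<tau> ((a - 1) mod n) = 1 - \<beta>" and right: "\<tau> ((b + 1) mod n) = 1 - \<beta>"
    unfolding is_block_def by auto
  define q where "q = a + (b - a) mod n"
  have "q mod n = (a + (b - a)) mod n" unfolding q_def by (rule mod_add_right_eq)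
  with ab have qb: "q mod n = b" by simp
  have "\<tau> (x mod n) = \<beta>" if "a - 1 < x" "x \<le> q" for x
  proof -
    have "x mod n \<in> cyc_interval n a b"
      using that unfolding cyc_interval_def q_def by (auto intro!: exI[of _ "x - a"])
    then show ?thesis using inside by blast
  qed
  moreover have "\<tau> ((q + 1) mod n) = 1 - \<beta>"
    using right qb by (metis mod_add_left_eq)
  moreover have "a - 1 < q"
    using pos_mod_sign[of n "b - a"] assms(1) unfolding q_def by linarith
  ultimately have "maximal_run (\<lambda>x. \<tau> (x mod n)) \<beta> (a - 1) q"
    using left \<beta> unfolding maximal_run_def by auto
  with \<beta> qb show ?thesis by blast
qed

locale binary_config =
  fixes n :: int and \<sigma> :: "int \<Rightarrow> nat"
  assumes n_pos: "1 \<le> n" and binary: "\<forall>i \<in> {0..<n}. \<sigma> i \<in> {0, 1}"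
begin

definition state :: "int \<Rightarrow> nat" where
  "state x = \<sigma> (x mod n)"

definition boundary :: "int \<Rightarrow> bool" where
  "boundary x \<longleftrightarrow> state x \<noteq> state (x + 1)"

lemma state_binary: "state x = 0 \<or> state x = 1"
  using binary n_pos unfolding state_def by auto

lemma state_mod: "state (x mod n) = state x"
  unfolding state_def by simp

lemma state_periodic: "state (x + k * n) = state x"
  unfolding state_def by simp

lemma boundary_mod: "boundary (x mod n) = boundary x"
  unfolding boundary_def state_def by (simp add: mod_add_left_eq)

lemma state_const_without_boundary:
  assumes "x \<le> y" and "\<And>j. x \<le> j \<Longrightarrow> j < y \<Longrightarrow> \<not> boundary j"
  shows "state y = state x"
proof -
  have "state j = state x" if "x \<le> j" "j \<le> y" for j
    using that
  proof (induction j rule: int_ge_induct)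
    case (step j)
    then have "state j = state x" and "\<not> boundary j" using assms(2)[of j] by simp_all
    then show ?case unfolding boundary_def by simp
  qed simp
  from this[of y] assms(1) show ?thesis by simp
qed

lemma boundary_exists_if_state_differs:
  assumes "state x \<noteq> state y"
  shows "\<exists>k. boundary k"
proof (rule ccontr)
  assume "\<nexists>k. boundary k"
  then have "state (max x y) = state (min x y)"
    by (intro state_const_without_boundary) auto
  with assms show False by (cases "x \<le> y") (auto simp: max_def min_def)
qed

lemma unique_boundary_if_switching_once:
  assumes "x < y" and "state x \<noteq> state y"
    and stays: "\<And>j. x \<le> j \<Longrightarrow> j < y \<Longrightarrow> state j = state y \<Longrightarrow> state (j + 1) = state y"
  shows "\<exists>k. x \<le> k \<and> k < y \<and> boundary k \<and> (\<forall>j. x \<le> j \<and> j < y \<and> boundary j \<longrightarrow> j = k)"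
proof -
  define m where "m = Min {j \<in> {x..y}. state j = state y}"
  have fin: "finite {j \<in> {x..y}. state j = state y}" by (rule finite_subset[of _ "{x..y}"]) auto
  have "y \<in> {j \<in> {x..y}. state j = state y}" using assms(1) by simp
  then have m: "m \<in> {x..y}" "state m = state y"
    using Min_in[OF fin] unfolding m_def[symmetric] by blast+
  have below: "state j \<noteq> state y" if "x \<le> j" "j < m" for j
  proof
    assume "state j = state y"
    then have "m \<le> j" using Min_le[OF fin, of j] m that unfolding m_def[symmetric] by simp
    with that show False by simp
  qed
  have above: "state j = state y" if "m \<le> j" "j \<le> y" for j
    using that
  proof (induction j rule: int_ge_induct)
    case (step j)
    then show ?case using stays[of j] m by simp
  qed (use m in simp)
  have "x < m" using m assms(2) by (cases "x = m") auto
  have "boundary (m - 1)"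
    using below[of "m - 1"] m \<open>x < m\<close> unfolding boundary_def by simp
  moreover have "j = m - 1" if "x \<le> j" "j < y" "boundary j" for j
  proof (rule ccontr)
    assume "j \<noteq> m - 1"
    then consider "j + 1 < m" | "m \<le> j" by linarith
    then show False
    proof cases
      case 1
      then show False
        using below[of j] below[of "j + 1"] state_binary[of j] state_binary[of "j + 1"]
          state_binary[of y] that unfolding boundary_def by auto
    next
      case 2
      then show False using above[of j] above[of "j + 1"] that unfolding boundary_def by simp
    qed
  qed
  ultimately show ?thesis using \<open>x < m\<close> m by (intro exI[of _ "m - 1"]) auto
qed

end

locale nonconstant_config = binary_config +
  assumes has_boundary: "\<exists>k. boundary k"
begin

definition boundary_list :: "int list" where
  "boundary_list = sorted_list_of_set {k \<in> {0..<n}. boundary k}"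

definition nblocks :: int where
  "nblocks = int (length boundary_list)"

text \<open>\<open>block_end\<close> enumerates the boundaries of the periodic configuration on \<open>\<int>\<close> in
  increasing order; the block with index \<open>t\<close> consists of the cells
  \<open>block_end (t - 1) + 1, \<dots>, block_end t\<close>.\<close>

definition block_end :: "int \<Rightarrow> int" where
  "block_end t = boundary_list ! nat (t mod nblocks) + n * (t div nblocks)"

lemma set_boundary_list: "set boundary_list = {k \<in> {0..<n}. boundary k}"
  unfolding boundary_list_def
  by (rule set_sorted_list_of_set, rule finite_subset[of _ "{0..<n}"]) auto

lemma boundary_list_nth:
  assumes "i < length boundary_list"
  shows "0 \<le> boundary_list ! i" and "boundary_list ! i < n" and "boundary (boundary_list ! i)"
  using nth_mem[OF assms] unfolding set_boundary_list by auto

lemma sorted_boundary_list: "sorted_wrt (<) boundary_list"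
  unfolding boundary_list_def by simp

lemma nblocks_pos: "1 \<le> nblocks"
proof -
  obtain k where "boundary k" using has_boundary by blast
  then have "k mod n \<in> set boundary_list" using n_pos by (simp add: boundary_mod set_boundary_list)
  then have "boundary_list \<noteq> []" by auto
  then show ?thesis unfolding nblocks_def by (simp add: Suc_le_eq)
qed

lemma boundary_list_index: "nat (t mod nblocks) < length boundary_list"
proof -
  have "0 \<le> t mod nblocks" "t mod nblocks < nblocks" using nblocks_pos by simp_all
  then show ?thesis unfolding nblocks_def by (simp add: nat_less_iff)
qed

lemma block_end_less_succ: "block_end t < block_end (t + 1)"
proof -
  define u d where "u = t mod nblocks" and "d = t div nblocks"
  have t: "t = d * nblocks + u" unfolding u_def d_def by (rule div_mult_mod_eq[symmetric])
  have u: "0 \<le> u" "u < nblocks" unfolding u_def using nblocks_pos by simp_all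
  show ?thesis
  proof (cases "u + 1 < nblocks")
    case True
    then have "(t + 1) mod nblocks = u + 1" "(t + 1) div nblocks = d"
      unfolding t using u by (simp_all add: add.assoc)
    moreover have "boundary_list ! nat u < boundary_list ! nat (u + 1)"
      using sorted_boundary_list True u unfolding nblocks_def
      by (auto simp: sorted_wrt_iff_nth_less nat_less_iff)
    ultimately show ?thesis unfolding block_end_def u_def[symmetric] d_def[symmetric] by simp
  next
    case False
    then have "t + 1 = (d + 1) * nblocks" using t u by (simp add: algebra_simps)
    then have "(t + 1) mod nblocks = 0" "(t + 1) div nblocks = d + 1" using nblocks_pos by simp_all
    moreover have "boundary_list ! nat u < n" "0 \<le> boundary_list ! 0"
      using boundary_list_nth boundary_list_index[of t] boundary_list_index[of 0]
      unfolding u_def by auto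
    ultimately show ?thesis
      unfolding block_end_def u_def[symmetric] d_def[symmetric] by (simp add: algebra_simps)
  qed
qed

lemma strict_mono_block_end: "strict_mono block_end"
proof (rule strict_monoI)
  fix s t :: int
  assume "s < t"
  then have "s + 1 \<le> t" by simp
  then show "block_end s < block_end t"
  proof (induction t rule: int_ge_induct)
    case base
    show ?case by (rule block_end_less_succ)
  next
    case (step t)
    with block_end_less_succ[of t] show ?case by simp
  qed
qed

lemma block_end_periodic: "block_end (t + k * nblocks) = block_end t + k * n"
  using nblocks_pos unfolding block_end_def by (simp add: algebra_simps)

lemma block_end_mod: "block_end t mod n = boundary_list ! nat (t mod nblocks)"
  using boundary_list_nth[OF boundary_list_index] unfolding block_end_def by simp

lemma boundary_block_end: "boundary (block_end t)"
proof -
  have "boundary (block_end t mod n)"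
    using boundary_list_nth(3)[OF boundary_list_index] by (simp add: block_end_mod)
  then show ?thesis by (simp add: boundary_mod)
qed

lemma boundary_imp_block_end:
  assumes "boundary x"
  shows "\<exists>t. block_end t = x"
proof -
  have "x mod n \<in> set boundary_list" using assms n_pos by (simp add: boundary_mod set_boundary_list)
  then obtain i where i: "i < length boundary_list" "boundary_list ! i = x mod n"
    by (metis in_set_conv_nth)
  have "block_end (int i + (x div n) * nblocks) = block_end (int i) + (x div n) * n"
    by (rule block_end_periodic)
  also have "block_end (int i) = x mod n"
    using i unfolding block_end_def nblocks_def by simp
  finally show ?thesis by (metis mod_div_mult_eq)
qed

lemma block_end_mod_eq_imp:
  assumes "block_end s mod n = block_end t mod n"
  shows "s mod nblocks = t mod nblocks"
proof -
  have "boundary_list ! nat (s mod nblocks) = boundary_list ! nat (t mod nblocks)"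
    using assms by (simp add: block_end_mod)
  then have "nat (s mod nblocks) = nat (t mod nblocks)"
    using nth_eq_iff_index_eq[OF _ boundary_list_index boundary_list_index]
    unfolding boundary_list_def by simp
  moreover have "0 \<le> s mod nblocks" "0 \<le> t mod nblocks" using nblocks_pos by simp_all
  ultimately show ?thesis by simp
qed

lemma block_end_within_period:
  assumes "A \<le> u" and "u < A + nblocks"
  shows "block_end (A - 1) < block_end u" and "block_end u \<le> block_end (A - 1) + n"
proof -
  show "block_end (A - 1) < block_end u"
    using assms strict_mono_less[OF strict_mono_block_end] by simp
  have "block_end u \<le> block_end (A - 1 + 1 * nblocks)"
    using assms strict_mono_less_eq[OF strict_mono_block_end] by simp
  then show "block_end u \<le> block_end (A - 1) + n" using block_end_periodic[of "A - 1" 1] by simp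
qed

lemma no_boundary_inside_block:
  assumes "block_end (t - 1) < j" and "j < block_end t"
  shows "\<not> boundary j"
proof
  assume "boundary j"
  then obtain s where "block_end s = j" using boundary_imp_block_end by blast
  with assms have "t - 1 < s" "s < t" using strict_mono_less[OF strict_mono_block_end] by auto
  then show False by simp
qed

lemma block_index_exists: "\<exists>t. block_end (t - 1) < x \<and> x \<le> block_end t"
proof -
  define K where "K = \<bar>x - block_end 0\<bar> + 1"
  have K: "x - block_end 0 < K" "block_end 0 - x < K" "0 \<le> K" unfolding K_def by auto
  have "K \<le> K * n" using mult_left_mono[OF n_pos K(3)] by simp
  moreover have "block_end (- K * nblocks) = block_end 0 - K * n"
    "block_end (K * nblocks) = block_end 0 + K * n"
    using block_end_periodic[of 0 "- K"] block_end_periodic[of 0 K] by simp_all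
  ultimately have "block_end (- K * nblocks) < x" "x \<le> block_end (K * nblocks)"
    using K by linarith+
  moreover have "- K * nblocks \<le> K * nblocks" using nblocks_pos K(3) by simp
  ultimately show ?thesis
    using crossing_exists[of "- K * nblocks" "K * nblocks" block_end x] by auto
qed

definition block_index :: "int \<Rightarrow> int" where
  "block_index x = (THE t. block_end (t - 1) < x \<and> x \<le> block_end t)"

lemma block_index_eqI:
  assumes "block_end (t - 1) < x" and "x \<le> block_end t"
  shows "block_index x = t"
  unfolding block_index_def
proof (rule the_equality)
  fix s
  assume "block_end (s - 1) < x \<and> x \<le> block_end s"
  with assms have "t - 1 < s" "s - 1 < t"
    using strict_mono_less[OF strict_mono_block_end] by fastforce+
  then show "s = t" by simp
qed (use assms in simp)

lemma block_index_bounds: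
  shows "block_end (block_index x - 1) < x" and "x \<le> block_end (block_index x)"
  using block_index_exists[of x] block_index_eqI by auto

lemma block_index_periodic: "block_index (x + k * n) = block_index x + k * nblocks"
  using block_index_bounds[of x] block_end_periodic[of "block_index x - 1" k]
    block_end_periodic[of "block_index x" k]
  by (intro block_index_eqI) (simp_all add: algebra_simps)

lemma block_index_succ_if_switching_once:
  assumes "x < y" and "state x \<noteq> state y"
    and "\<And>j. x \<le> j \<Longrightarrow> j < y \<Longrightarrow> state j = state y \<Longrightarrow> state (j + 1) = state y"
  shows "block_index y = block_index x + 1"
proof -
  obtain k where k: "x \<le> k" "k < y" "boundary k"
    and unique: "\<And>j. x \<le> j \<Longrightarrow> j < y \<Longrightarrow> boundary j \<Longrightarrow> j = k"
    using unique_boundary_if_switching_once[OF assms] by blast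
  obtain s where s: "block_end s = k" using boundary_imp_block_end k(3) by blast
  note less = strict_mono_less[OF strict_mono_block_end]
  have "block_end (s - 1) < x"
  proof (rule ccontr)
    assume "\<not> block_end (s - 1) < x"
    moreover have "block_end (s - 1) < k" using s less[of "s - 1" s] by simp
    ultimately have "block_end (s - 1) = block_end s"
      using unique[OF _ _ boundary_block_end] k(2) s by simp
    then show False using less[of "s - 1" s] by simp
  qed
  then have "block_index x = s" using block_index_eqI k(1) s by simp
  moreover have "y \<le> block_end (s + 1)"
  proof (rule ccontr)
    assume "\<not> y \<le> block_end (s + 1)"
    moreover have "k < block_end (s + 1)" using s less[of s "s + 1"] by simp
    ultimately have "block_end (s + 1) = block_end s"
      using unique[OF _ _ boundary_block_end] k(1) s by simp
    then show False using less[of s "s + 1"] by simp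
  qed
  then have "block_index y = s + 1" using block_index_eqI[of "s + 1" y] k(2) s by simp
  ultimately show ?thesis by simp
qed

lemma state_in_block:
  assumes "block_end (t - 1) < x" and "x \<le> block_end t"
  shows "state x = state (block_end t)"
  using state_const_without_boundary[OF assms(2)] no_boundary_inside_block[of t] assms(1) by simp

lemma state_block_end_succ: "state (block_end (t + 1)) \<noteq> state (block_end t)"
proof -
  have "state (block_end t + 1) = state (block_end (t + 1))"
    using state_in_block[of "t + 1" "block_end t + 1"] block_end_less_succ[of t] by simp
  then show ?thesis using boundary_block_end[of t] unfolding boundary_def by simp
qed

lemma state_block_end_eq_iff_even:
  assumes "s \<le> t"
  shows "state (block_end t) = state (block_end s) \<longleftrightarrow> even (t - s)"
  using assms
proof (induction t rule: int_ge_induct)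
  case (step t)
  have "state (block_end (t + 1)) = state (block_end s) \<longleftrightarrow> state (block_end t) \<noteq> state (block_end s)"
    using state_block_end_succ[of t] state_binary[of "block_end t"]
      state_binary[of "block_end (t + 1)"] state_binary[of "block_end s"] by auto
  moreover have "even (t + 1 - s) \<longleftrightarrow> odd (t - s)" by presburger
  ultimately show ?case using step.IH by blast
qed simp

lemma state_eq_iff_even_block_index:
  "state x = state y \<longleftrightarrow> even (block_index x - block_index y)"
proof -
  have "state x = state (block_end (block_index x))" "state y = state (block_end (block_index y))"
    using state_in_block block_index_bounds by simp_all
  moreover have "even (block_index y - block_index x) \<longleftrightarrow> even (block_index x - block_index y)"
    by (metis minus_diff_eq even_minus)
  ultimately show ?thesis
    using state_block_end_eq_iff_even[of "block_index x" "block_index y"]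
      state_block_end_eq_iff_even[of "block_index y" "block_index x"]
    by (cases "block_index x \<le> block_index y") auto
qed

lemma even_nblocks: "even nblocks"
proof -
  have "block_end nblocks = block_end 0 + 1 * n" using block_end_periodic[of 0 1] by simp
  then have "state (block_end nblocks) = state (block_end 0)" using state_periodic by metis
  then show ?thesis using state_block_end_eq_iff_even[of 0 nblocks] nblocks_pos by simp
qed

definition block :: "int \<Rightarrow> int \<times> int" where
  "block t = ((block_end (t - 1) + 1) mod n, block_end t mod n)"

lemma block_cells:
  "cyc_interval n (fst (block t)) (snd (block t))
   = (\<lambda>x. x mod n) ` {block_end (t - 1) + 1 .. block_end t}"
  unfolding block_def using cyc_interval_eq_image block_end_less_succ[of "t - 1"]
    block_end_within_period(2)[of t t] nblocks_pos
  by simp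

lemma block_in_blocks: "block t \<in> blocks n \<sigma>"
proof -
  define \<beta> where "\<beta> = state (block_end t)"
  have "\<sigma> k = \<beta>" if k: "k \<in> cyc_interval n (fst (block t)) (snd (block t))" for k
  proof -
    obtain x where "k = x mod n" "block_end (t - 1) + 1 \<le> x" "x \<le> block_end t"
      using k unfolding block_cells by auto
    then show ?thesis using state_in_block unfolding \<beta>_def state_def by auto
  qed
  moreover have "state (block_end (t - 1)) = 1 - \<beta>"
    using state_block_end_succ[of "t - 1"] state_binary[of "block_end t"]
      state_binary[of "block_end (t - 1)"]
    unfolding \<beta>_def by auto
  then have "\<sigma> ((fst (block t) - 1) mod n) = 1 - \<beta>"
    unfolding block_def state_def by (simp add: mod_diff_left_eq)
  moreover have "state (block_end t + 1) = 1 - \<beta>"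
    using boundary_block_end[of t] state_binary[of "block_end t"]
      state_binary[of "block_end t + 1"]
    unfolding \<beta>_def boundary_def by auto
  then have "\<sigma> ((snd (block t) + 1) mod n) = 1 - \<beta>"
    unfolding block_def state_def by (simp add: mod_add_left_eq)
  moreover have "\<beta> \<in> {0, 1}" using state_binary unfolding \<beta>_def by auto
  ultimately show ?thesis
    using n_pos unfolding blocks_def is_block_def block_def by auto
qed

lemma block_periodic: "block (t + k * nblocks) = block t"
proof -
  have "block_end (t + k * nblocks - 1) + 1 = (block_end (t - 1) + 1) + k * n"
    using block_end_periodic[of "t - 1" k] by (simp add: algebra_simps)
  then have "(block_end (t + k * nblocks - 1) + 1) mod n = (block_end (t - 1) + 1) mod n"
    by (simp only: mod_mult_self1)
  then show ?thesis using block_end_periodic[of t k] unfolding block_def by simp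
qed

lemma block_eq_iff: "block s = block t \<longleftrightarrow> s mod nblocks = t mod nblocks"
proof
  assume "block s = block t"
  then show "s mod nblocks = t mod nblocks"
    unfolding block_def by (intro block_end_mod_eq_imp) simp
next
  assume "s mod nblocks = t mod nblocks"
  then have "nblocks dvd t - s" by (metis mod_eq_dvd_iff)
  then obtain k where "t - s = nblocks * k" by (rule dvdE)
  then have "t = s + k * nblocks" by (simp add: algebra_simps)
  then show "block s = block t" using block_periodic by simp
qed

lemma block_mod_nblocks: "block t = block (A + (t - A) mod nblocks)"
  unfolding block_eq_iff by (simp add: mod_add_right_eq)

lemma inj_on_block: "inj_on block {A .. A + nblocks - 1}"
proof (rule inj_onI)
  fix u v
  assume "u \<in> {A .. A + nblocks - 1}" "v \<in> {A .. A + nblocks - 1}" "block u = block v"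
  then show "u = v" using mod_eq_imp_eq_in_window[of u nblocks v A] by (simp add: block_eq_iff)
qed

lemma block_succ_adjacent: "fst (block (t + 1)) = (snd (block t) + 1) mod n"
  unfolding block_def by (simp add: mod_add_left_eq)

lemma blocks_eq_range_block: "blocks n \<sigma> = range block"
proof (intro equalityI subsetI)
  fix Y
  assume Y: "Y \<in> blocks n \<sigma>"
  obtain i j where ij: "Y = (i, j)" by force
  obtain \<beta> q where q: "q mod n = j" and run: "maximal_run state \<beta> (i - 1) q"
    using block_maximal_run[OF n_pos] Y unfolding ij state_def[abs_def] by blast
  then have "boundary (i - 1)" "boundary q" and inside: "\<And>x. i - 1 < x \<Longrightarrow> x \<le> q \<Longrightarrow> state x = \<beta>"
    unfolding maximal_run_def boundary_def by auto
  obtain t where t: "block_end t = i - 1" using boundary_imp_block_end \<open>boundary (i - 1)\<close> by blast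
  obtain s where s: "block_end s = q" using boundary_imp_block_end \<open>boundary q\<close> by blast
  note less = strict_mono_less[OF strict_mono_block_end]
  note less_eq = strict_mono_less_eq[OF strict_mono_block_end]
  have "i - 1 < q" using run unfolding maximal_run_def by simp
  then have "t < s" using t s less[of t s] by simp
  then have "block_end (t + 1) \<le> q" using s less_eq[of "t + 1" s] by simp
  moreover have "i \<le> block_end (t + 1)" using t less[of t "t + 1"] by simp
  moreover have "\<not> boundary x" if "i \<le> x" "x < q" for x
    using inside[of x] inside[of "x + 1"] that unfolding boundary_def by simp
  ultimately have "block_end (t + 1) = q" using boundary_block_end[of "t + 1"] by fastforce
  moreover have "i mod n = i" using blocks_in_range[of i j n \<sigma>] Y ij by simp
  ultimately have "block (t + 1) = Y" unfolding block_def ij using t q by simp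
  then show "Y \<in> range block" by (metis rangeI)
qed (use block_in_blocks in auto)

lemma mem_block_iff:
  "x mod n \<in> cyc_interval n (fst (block t)) (snd (block t)) \<longleftrightarrow> block (block_index x) = block t"
proof
  assume "x mod n \<in> cyc_interval n (fst (block t)) (snd (block t))"
  then obtain y where y: "x mod n = y mod n" "block_end (t - 1) + 1 \<le> y" "y \<le> block_end t"
    unfolding block_cells by auto
  have "block_index y = t" using y by (intro block_index_eqI) auto
  moreover have "x = y + (x div n - y div n) * n"
    using div_mult_mod_eq[of x n] div_mult_mod_eq[of y n] y(1)
    unfolding left_diff_distrib by linarith
  ultimately show "block (block_index x) = block t"
    using block_index_periodic block_periodic by metis
next
  assume "block (block_index x) = block t"
  moreover have
    "x mod n \<in> cyc_interval n (fst (block (block_index x))) (snd (block (block_index x)))"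
    unfolding block_cells using block_index_bounds[of x] by auto
  ultimately show "x mod n \<in> cyc_interval n (fst (block t)) (snd (block t))" by simp
qed

lemma block_containing_eq: "block_containing n \<sigma> x = block (block_index x)"
  unfolding block_containing_def blocks_eq_range_block
  using mem_block_iff by (intro the_equality) auto

lemma block_index_cong:
  assumes "x mod n = y mod n"
  shows "block (block_index x + k) = block (block_index y + k)"
proof -
  have "y = x + (y div n - x div n) * n"
    using div_mult_mod_eq[of x n] div_mult_mod_eq[of y n] assms
    unfolding left_diff_distrib by linarith
  then have "block_index y + k = block_index x + k + (y div n - x div n) * nblocks"
    using block_index_periodic[of x "y div n - x div n"] by simp
  then show ?thesis using block_periodic by metis
qed

lemma f_left_eq: "f_left r n \<sigma> X = block (block_index (snd X - int r))"
  unfolding f_left_def by (simp add: block_containing_eq)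

lemma f_right_eq: "f_right r n \<sigma> X = block (block_index (fst X + int r))"
  unfolding f_right_def by (simp add: block_containing_eq)

lemma cells_from_block_to_block:
  assumes "A \<le> B" and "B < A + nblocks"
  shows "cyc_interval n (fst (block A)) (snd (block B))
    = (\<lambda>x. x mod n) ` {block_end (A - 1) + 1 .. block_end B}"
  using cyc_interval_eq_image[of "block_end (A - 1) + 1" "block_end B" n]
    block_end_within_period[OF assms]
  unfolding block_def by simp

lemma block_cells_subset_iff:
  assumes "A \<le> u" "u < A + nblocks" and "A \<le> B" "B < A + nblocks"
  shows "cyc_interval n (fst (block u)) (snd (block u))
      \<subseteq> cyc_interval n (fst (block A)) (snd (block B)) \<longleftrightarrow> u \<le> B"
proof
  assume sub: "cyc_interval n (fst (block u)) (snd (block u))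
    \<subseteq> cyc_interval n (fst (block A)) (snd (block B))"
  show "u \<le> B"
  proof (rule ccontr)
    assume "\<not> u \<le> B"
    define z where "z = block_end (u - 1) + 1"
    have z: "block_end B < z" "z \<le> block_end (A - 1) + n"
      using strict_mono_less_eq[OF strict_mono_block_end, of B "u - 1"] \<open>\<not> u \<le> B\<close>
        block_end_less_succ[of "u - 1"] block_end_within_period(2)[OF assms(1,2)]
      unfolding z_def by auto
    have "z mod n \<in> cyc_interval n (fst (block u)) (snd (block u))"
      unfolding block_cells z_def using block_end_less_succ[of "u - 1"] by auto
    then obtain w where "z mod n = w mod n" "block_end (A - 1) + 1 \<le> w" "w \<le> block_end B"
      using sub cells_from_block_to_block[OF assms(3,4)] by auto
    then show False
      using mod_eq_imp_eq_in_window[of z n w "block_end (A - 1) + 1"] z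
        block_end_within_period(2)[OF assms(3,4)]
      by simp
  qed
next
  assume "u \<le> B"
  then have "{block_end (u - 1) + 1 .. block_end u} \<subseteq> {block_end (A - 1) + 1 .. block_end B}"
    using assms(1) strict_mono_less_eq[OF strict_mono_block_end] by auto
  then show "cyc_interval n (fst (block u)) (snd (block u))
    \<subseteq> cyc_interval n (fst (block A)) (snd (block B))"
    unfolding block_cells cells_from_block_to_block[OF assms(3,4)] by (rule image_mono)
qed

lemma block_interval_eq:
  "block_interval n \<sigma> (block A) (block B) = block ` {A .. A + (B - A) mod nblocks}"
proof -
  define B' where "B' = A + (B - A) mod nblocks"
  have B': "A \<le> B'" "B' < A + nblocks" unfolding B'_def using nblocks_pos by auto
  have "Y \<in> block_interval n \<sigma> (block A) (block B) \<longleftrightarrow> Y \<in> block ` {A .. B'}" for Y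
  proof
    assume "Y \<in> block_interval n \<sigma> (block A) (block B)"
    then obtain u0 where "Y = block u0"
      and sub: "cyc_interval n (fst Y) (snd Y) \<subseteq> cyc_interval n (fst (block A)) (snd (block B'))"
      unfolding block_interval_def blocks_eq_range_block B'_def block_mod_nblocks[of B A] by auto
    define u where "u = A + (u0 - A) mod nblocks"
    have u: "Y = block u" "A \<le> u" "u < A + nblocks"
      using \<open>Y = block u0\<close> block_mod_nblocks[of u0 A] nblocks_pos unfolding u_def by simp_all
    with sub block_cells_subset_iff[OF u(2,3) B'] show "Y \<in> block ` {A .. B'}" by auto
  next
    assume "Y \<in> block ` {A .. B'}"
    then obtain u where "Y = block u" "A \<le> u" "u \<le> B'" by auto
    with block_cells_subset_iff[of A u B'] B' block_mod_nblocks[of B A]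
    show "Y \<in> block_interval n \<sigma> (block A) (block B)"
      unfolding block_interval_def B'_def by (simp add: block_in_blocks)
  qed
  then show ?thesis unfolding B'_def by blast
qed

lemma block_start_offset:
  assumes "A \<le> u" and "u < A + nblocks"
  shows "(fst (block u) - fst (block A)) mod n = block_end (u - 1) - block_end (A - 1)"
proof -
  have "block_end (A - 1) \<le> block_end (u - 1)"
    using strict_mono_less_eq[OF strict_mono_block_end] assms by simp
  moreover have "block_end (u - 1) < block_end (A - 1 + 1 * nblocks)"
    using strict_mono_less[OF strict_mono_block_end] assms by simp
  ultimately show ?thesis
    using block_end_periodic[of "A - 1" 1]
    unfolding block_def by (simp add: mod_diff_eq mod_pos_pos_trivial)
qed

lemma middle_block_eq:
  assumes "0 \<le> m" and "2 * m < nblocks"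
  shows "middle_block n (fst (block A)) (block ` {A .. A + 2 * m}) = block (A + m)"
proof -
  define key where "key W = (fst W - fst (block A)) mod n" for W :: "int \<times> int"
  have mono: "strict_mono_on {A .. A + 2 * m} (key \<circ> block)"
    using assms by (intro strict_mono_onI)
      (simp add: key_def block_start_offset strict_mono_less[OF strict_mono_block_end])
  have inj: "inj_on block {A .. A + 2 * m}"
    by (rule inj_on_subset[OF inj_on_block[of A]]) (use assms in auto)
  note card = card_key_less_image[OF inj mono]
  let ?S = "block ` {A .. A + 2 * m}"
  have "middle_block n (fst (block A)) ?S
      = (THE Z. Z \<in> ?S \<and> card {W \<in> ?S. key W < key Z} = card {W \<in> ?S. key Z < key W})"
    unfolding middle_block_def key_def ..
  also have "\<dots> = block (A + m)"
  proof (rule the_equality)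
    show "block (A + m) \<in> ?S \<and>
        card {W \<in> ?S. key W < key (block (A + m))} = card {W \<in> ?S. key (block (A + m)) < key W}"
      using card[of "A + m"] assms by auto
  next
    fix Z
    assume Z: "Z \<in> ?S \<and> card {W \<in> ?S. key W < key Z} = card {W \<in> ?S. key Z < key W}"
    then obtain u where u: "Z = block u" "u \<in> {A .. A + 2 * m}" by blast
    with Z card[of u] have "nat (u - A) = nat (A + 2 * m - u)" by simp
    with u have "u = A + m" by (simp add: eq_nat_nat_iff)
    with u show "Z = block (A + m)" by simp
  qed
  finally show ?thesis .
qed

lemma alignment_eq_block:
  assumes "f_left r n \<sigma> X = block L" and "f_right r n \<sigma> X = block R" and "even (R - L)"
  shows "alignment r n \<sigma> \<sigma>' X = block (L + ((R - L) mod nblocks) div 2)"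
proof -
  define m where "m = ((R - L) mod nblocks) div 2"
  have "(R - L) mod nblocks = (R - L) - (R - L) div nblocks * nblocks"
    by (simp add: minus_div_mult_eq_mod)
  then have "even ((R - L) mod nblocks)" using assms(3) even_nblocks by simp
  then have m: "(R - L) mod nblocks = 2 * m" unfolding m_def by simp
  have "0 \<le> m" "2 * m < nblocks" using m nblocks_pos pos_mod_bound[of nblocks "R - L"]
    pos_mod_sign[of nblocks "R - L"] by simp_all
  have "alignment r n \<sigma> \<sigma>' X
      = middle_block n (fst (block L)) (block_interval n \<sigma> (block L) (block R))"
    using assms(1,2) unfolding alignment_def Let_def by simp
  also have "\<dots> = middle_block n (fst (block L)) (block ` {L .. L + 2 * m})"
    unfolding block_interval_eq m ..
  also have "\<dots> = block (L + m)" by (rule middle_block_eq) fact+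
  finally show ?thesis unfolding m_def .
qed

end

section \<open>Temporally periodic pairs\<close>

locale majority_pair = binary_config n \<sigma> for n \<sigma> +
  fixes r :: nat and \<sigma>' :: "int \<Rightarrow> nat"
  assumes binary': "\<forall>i \<in> {0..<n}. \<sigma>' i \<in> {0, 1}"
    and temporally_periodic: "temporally_periodic_pair r n \<sigma> \<sigma>'"
    and has_block': "blocks n \<sigma>' \<noteq> {}"
begin

lemma \<sigma>'_eq_maj: "\<sigma>' (i mod n) = maj r n \<sigma> i"
  using temporally_periodic n_pos maj_mod[of r n \<sigma> i]
  unfolding temporally_periodic_pair_def by simp

lemma \<sigma>_eq_maj: "\<sigma> (i mod n) = maj r n \<sigma>' i"
  using temporally_periodic n_pos maj_mod[of r n \<sigma>' i]
  unfolding temporally_periodic_pair_def by simp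

lemma preimage_of_run':
  assumes \<beta>: "\<beta> \<in> {0, 1}" and run: "maximal_run (\<lambda>x. \<sigma>' (x mod n)) \<beta> p q"
  shows "state (p - int r) \<noteq> \<beta>" and "state (q - int r) = \<beta>"
    and "state (p + int r + 1) = \<beta>" and "state (q + int r + 1) \<noteq> \<beta>"
    and "\<And>j. p - int r \<le> j \<Longrightarrow> j < q - int r \<Longrightarrow> state j = \<beta> \<Longrightarrow> state (j + 1) = \<beta>"
    and "\<And>j. p + int r + 1 \<le> j \<Longrightarrow> j < q + int r \<Longrightarrow> state j \<noteq> \<beta> \<Longrightarrow> state (j + 1) \<noteq> \<beta>"
proof -
  have \<sigma>_binary: "\<forall>x. \<sigma> (x mod n) \<in> {0, 1}" using state_binary unfolding state_def by auto
  have \<sigma>'_binary: "\<forall>x. \<sigma>' (x mod n) \<in> {0, 1}" using binary' n_pos by simp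
  have pq: "p < q" and inside: "\<And>x. p < x \<Longrightarrow> x \<le> q \<Longrightarrow> \<sigma>' (x mod n) = \<beta>"
    and before: "\<sigma>' (p mod n) \<noteq> \<beta>" and after: "\<sigma>' ((q + 1) mod n) \<noteq> \<beta>"
    using run unfolding maximal_run_def by auto
  have "maj r n \<sigma> q = \<beta>" "maj r n \<sigma> (q + 1) \<noteq> \<beta>"
    using \<sigma>'_eq_maj inside[of q] after pq by auto
  from maj_switch_cells[OF \<sigma>_binary \<beta> this]
  show "state (q - int r) = \<beta>" "state (q + int r + 1) \<noteq> \<beta>" unfolding state_def .
  have "maj r n \<sigma> p \<noteq> \<beta>" "maj r n \<sigma> (p + 1) = \<beta>"
    using \<sigma>'_eq_maj before inside[of "p + 1"] pq by auto
  then have "maj r n \<sigma> p = 1 - \<beta>" "maj r n \<sigma> (p + 1) \<noteq> 1 - \<beta>"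
    using maj_binary[of r n \<sigma> p] \<beta> by auto
  from maj_switch_cells[OF \<sigma>_binary _ this]
  show "state (p - int r) \<noteq> \<beta>" "state (p + int r + 1) = \<beta>"
    using \<beta> state_binary[of "p + int r + 1"] unfolding state_def by auto
  show "state (j + 1) = \<beta>" if "p - int r \<le> j" "j < q - int r" "state j = \<beta>" for j
  proof -
    have "maj r n \<sigma>' (j + 1) = \<beta>"
      using maj_succ_if_entering[OF \<sigma>'_binary \<beta>] \<sigma>_eq_maj inside[of "j + int r + 1"] that
      unfolding state_def by simp
    then show ?thesis unfolding state_def by (simp add: \<sigma>_eq_maj)
  qed
  show "state (j + 1) \<noteq> \<beta>" if "p + int r + 1 \<le> j" "j < q + int r" "state j \<noteq> \<beta>" for j
  proof -
    have "maj r n \<sigma>' (j + 1) \<noteq> \<beta>"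
      using maj_succ_if_leaving[OF \<sigma>'_binary \<beta>] \<sigma>_eq_maj inside[of "j - int r"] that
      unfolding state_def by simp
    then show ?thesis unfolding state_def by (simp add: \<sigma>_eq_maj)
  qed
qed

end

sublocale majority_pair \<subseteq> nonconstant_config
proof
  obtain a b where "(a, b) \<in> blocks n \<sigma>'" using has_block' by auto
  then obtain \<beta> q where "\<beta> \<in> {0, 1}" "maximal_run (\<lambda>x. \<sigma>' (x mod n)) \<beta> (a - 1) q"
    using block_maximal_run[OF n_pos] by blast
  from preimage_of_run'(1,2)[OF this] show "\<exists>k. boundary k"
    by (intro boundary_exists_if_state_differs[of "a - 1 - int r" "q - int r"]) simp
qed

context majority_pair
begin

lemma block_index_images_of_block':
  assumes "(a, b) \<in> blocks n \<sigma>'"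
  shows "block (block_index (b - int r)) = block (block_index (a - 1 - int r) + 1)"
    and "block (block_index (b + 1 + int r)) = block (block_index (a + int r) + 1)"
    and "state (a + int r) = state (b - int r)"
proof -
  obtain \<beta> q where \<beta>: "\<beta> \<in> {0, 1}" and q: "q mod n = b"
    and run: "maximal_run (\<lambda>x. \<sigma>' (x mod n)) \<beta> (a - 1) q"
    using block_maximal_run[OF n_pos assms] by blast
  note preimage = preimage_of_run'[OF \<beta> run]
  have "a - 1 < q" using run unfolding maximal_run_def by simp
  have "(b - int r) mod n = (q - int r) mod n" "(b + (1 + int r)) mod n = (q + (1 + int r)) mod n"
    unfolding q[symmetric] by (rule mod_diff_left_eq, rule mod_add_left_eq)
  then have mod_b: "(b - int r) mod n = (q - int r) mod n"
      "(b + 1 + int r) mod n = (q + int r + 1) mod n"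
    by (simp_all add: ac_simps)
  have "block_index (q - int r) = block_index (a - 1 - int r) + 1"
    using \<open>a - 1 < q\<close> preimage(1,2,5) by (intro block_index_succ_if_switching_once) auto
  then show "block (block_index (b - int r)) = block (block_index (a - 1 - int r) + 1)"
    using block_index_cong[OF mod_b(1), of 0] by simp
  have switch: "state (j + 1) = state (q + int r + 1)"
    if "a + int r \<le> j" "j < q + int r + 1" "state j = state (q + int r + 1)" for j
  proof (cases "j = q + int r")
    case False
    then show ?thesis
      using preimage(4) preimage(6)[of j] that state_binary[of "j + 1"] state_binary[of j]
        state_binary[of "q + int r + 1"] \<beta> by auto
  qed simp
  have "block_index (q + int r + 1) = block_index (a + int r) + 1"
    by (rule block_index_succ_if_switching_once[OF _ _ switch])
      (use \<open>a - 1 < q\<close> preimage(3,4) in simp_all)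
  then show "block (block_index (b + 1 + int r)) = block (block_index (a + int r) + 1)"
    using block_index_cong[OF mod_b(2), of 0] by simp
  have "state (b - int r) = state (q - int r)" using mod_b(1) state_mod by metis
  with preimage(2,3) show "state (a + int r) = state (b - int r)" by simp
qed

lemma f_left_f_right_of_next_block':
  assumes "(a, b) \<in> blocks n \<sigma>'" and "(c, d) \<in> blocks n \<sigma>'" and "c = (b + 1) mod n"
  shows "f_left r n \<sigma> (c, d) = block (block_index (b - int r) + 1)"
    and "f_right r n \<sigma> (c, d) = block (block_index (a + int r) + 1)"
proof -
  have "(c - 1 - int r) mod n = ((b + 1) mod n - (1 + int r)) mod n"
    unfolding assms(3) diff_diff_eq ..
  also have "\<dots> = (b - int r) mod n" by (simp add: mod_diff_left_eq)
  finally have "(c - 1 - int r) mod n = (b - int r) mod n" .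
  moreover have "(c + int r) mod n = (b + 1 + int r) mod n"
    using assms(3) by (simp add: mod_add_left_eq)
  ultimately show "f_left r n \<sigma> (c, d) = block (block_index (b - int r) + 1)"
    and "f_right r n \<sigma> (c, d) = block (block_index (a + int r) + 1)"
    using block_index_images_of_block'[OF assms(1)] block_index_images_of_block'[OF assms(2)]
      block_index_cong[of "c - 1 - int r" "b - int r" 1]
      block_index_cong[of "c + int r" "b + 1 + int r" 0]
    by (simp_all add: f_left_eq f_right_eq)
qed

end

theorem claim14:
  fixes r :: nat and n :: int and \<sigma> \<sigma>' :: "int \<Rightarrow> nat"
    and a b c d a' b' c' d' :: int
  assumes "r \<ge> 1" and "n \<ge> 1"
    and "\<forall>i \<in> {0..<n}. \<sigma> i \<in> {0, 1}" and "\<forall>i \<in> {0..<n}. \<sigma>' i \<in> {0, 1}"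
    and "temporally_periodic_pair r n \<sigma> \<sigma>'"
    and "(a, b) \<in> blocks n \<sigma>'" and "(c, d) \<in> blocks n \<sigma>'"
    and "c = (b + 1) mod n"
    and "alignment r n \<sigma> \<sigma>' (a, b) = (a', b')"
    and "alignment r n \<sigma> \<sigma>' (c, d) = (c', d')"
  shows "(a', b') \<in> blocks n \<sigma> \<and> (c', d') \<in> blocks n \<sigma> \<and> c' = (b' + 1) mod n"
proof -
  interpret majority_pair n \<sigma> r \<sigma>'
    using assms(2-6) by unfold_locales auto
  define L R where "L = block_index (b - int r)" and "R = block_index (a + int r)"
  define M where "M = L + ((R - L) mod nblocks) div 2"
  have "even (R - L)"
    using block_index_images_of_block'(3)[OF assms(6)] state_eq_iff_even_block_index
    unfolding L_def R_def by blast
  then have "alignment r n \<sigma> \<sigma>' (a, b) = block M"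
    unfolding M_def by (intro alignment_eq_block) (simp_all add: f_left_eq f_right_eq L_def R_def)
  moreover have "alignment r n \<sigma> \<sigma>' (c, d) = block (M + 1)"
    using \<open>even (R - L)\<close> f_left_f_right_of_next_block'[OF assms(6-8)]
      alignment_eq_block[of r "(c, d)" "L + 1" "R + 1" \<sigma>']
    unfolding M_def L_def R_def by (simp add: algebra_simps)
  ultimately have "(a', b') = block M" and "(c', d') = block (M + 1)"
    using assms(9,10) by simp_all
  then show ?thesis using block_in_blocks block_succ_adjacent[of M] by (metis fst_conv snd_conv)
qed

end
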